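(* Let $v\ge 2$, $n\ge 1$ and $\epsilon>0$, and let $(\mathcal{X},\mathcal{Y},\mathcal{I})$ be a $(v,b,r,k,\lambda)$-block design with $\mathcal{X}=\{1,\dots,v\}$. Let $Q$ be the associated block design mechanism, $Q(y|x)=\alpha e^\epsilon$ if $(x,y)\in\mathcal{I}$ and $Q(y|x)=\alpha$ otherwise, where $\alpha=\frac{1}{re^\epsilon+b-r}$. Let $X_1,\dots,X_n$ be i.i.d. with distribution $P\in\Delta_v$ and, independently for each $i$, $Y_i\sim Q(\cdot|X_i)$. Define, for $x\in\mathcal{X}$, $$\hat{P}_{n,x}(Y_1,\dots,Y_n)=\frac{1}{(r-\lambda)(e^\epsilon-1)}\left(\frac{N_x(Y_1,\dots,Y_n)}{n\alpha}-(\lambda e^\epsilon+(r-\lambda))\right),\qquad N_x(Y_1,\dots,Y_n)=\sum_{i=1}^n \mathbb{1}(Y_i\in\mathcal{I}_x).$$ Then $\hat{P}_n=(\hat P_{n,1},\dots,\hat P_{n,v})$ is unbiased, i.e. $\mathbb{E}_{P,Q}[\hat P_n]=P$ for all $P\in\Delta_v$; its risk under the squared loss $\ell_2^2(p,\hat p)=\sum_{x=1}^v (p_x-\hat p_x)^2$ is $$R_{v,n}(\ell_2^2,P,Q,\hat P_n)=\frac{1}{n}\left(\frac{(v-1)^2(ke^\epsilon+v-k)^2}{k(v-k)(e^\epsilon-1)^2v}+\frac{1}{v}-\sum_{x\in\mathcal{X}}P_x^2\right),$$ and its worst-case risk is $$\sup_{P\in\Delta_v}R_{v,n}(\ell_2^2,P,Q,\hat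 P_n)=\frac{(v-1)^2(ke^\epsilon+v-k)^2}{k(v-k)(e^\epsilon-1)^2nv},$$ the supremum being attained when $P$ is the uniform distribution.
   Context: $\Delta_v$ is the set of probability vectors on $\{1,\dots,v\}$. An incidence structure is a triple $(\mathcal{X},\mathcal{Y},\mathcal{I})$ with $\mathcal{I}\subset\mathcal{X}\times\mathcal{Y}$; write $\mathcal{I}_x=\{y:(x,y)\in\mathcal{I}\}$ and $\mathcal{I}^y=\{x:(x,y)\in\mathcal{I}\}$. For integers $v>k>0$, $b>r>\lambda\ge0$, a $(v,b,r,k,\lambda)$-block design is an incidence structure with $|\mathcal{X}|=v$, $|\mathcal{Y}|=b$, $|\mathcal{I}_x|=r$ for all $x$, $|\mathcal{I}^y|=k$ for all $y$, and $|\mathcal{I}_x\cap\mathcal{I}_{x'}|=\lambda$ for all $x\ne x'$. The risk is $R_{v,n}(\ell,P,Q,\hat P_n)=\mathbb{E}[\ell(P,\hat P_n(Y_1,\dots,Y_n))]$ with expectation over $X_i\sim P$ i.i.d. and $Y_i\sim Q(\cdot|X_i)$. *)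

theory Defs
  imports "HOL-Probability.Probability"
begin

definition block_design ::
  "nat \<Rightarrow> nat \<Rightarrow> nat \<Rightarrow> nat \<Rightarrow> nat \<Rightarrow> 'b set \<Rightarrow> (nat \<times> 'b) set \<Rightarrow> bool" where
  "block_design v b r k lam Y I \<longleftrightarrow>
     v > k \<and> k > 0 \<and> b > r \<and> r > lam \<and>
     I \<subseteq> {1..v} \<times> Y \<and> finite Y \<and> card Y = b \<and>
     (\<forall>x\<in>{1..v}. card {y. (x, y) \<in> I} = r) \<and>
     (\<forall>y\<in>Y. card {x. (x, y) \<in> I} = k) \<and>
     (\<forall>x\<in>{1..v}. \<forall>x'\<in>{1..v}. x \<noteq> x' \<longrightarrow>
        card ({y. (x, y) \<in> I} \<inter> {y. (x', y) \<in> I}) = lam)"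

definition prob_simplex :: "nat \<Rightarrow> nat pmf set" where
  "prob_simplex v = {P. set_pmf P \<subseteq> {1..v}}"

definition bd_alpha :: "nat \<Rightarrow> nat \<Rightarrow> real \<Rightarrow> real" where
  "bd_alpha b r \<epsilon> = 1 / (real r * exp \<epsilon> + real b - real r)"

definition bd_mech :: "nat \<Rightarrow> nat \<Rightarrow> 'b set \<Rightarrow> (nat \<times> 'b) set \<Rightarrow> real \<Rightarrow> nat \<Rightarrow> 'b pmf" where
  "bd_mech b r Y I \<epsilon> x = embed_pmf (\<lambda>y. if y \<in> Y then
      (if (x, y) \<in> I then bd_alpha b r \<epsilon> * exp \<epsilon> else bd_alpha b r \<epsilon>) else 0)"

definition sample :: "nat pmf \<Rightarrow> (nat \<Rightarrow> 'b pmf) \<Rightarrow> nat \<Rightarrow> (nat \<Rightarrow> nat \<times> 'b) pmf" where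
  "sample P Q n = Pi_pmf {..<n} undefined
      (\<lambda>_. bind_pmf P (\<lambda>x. map_pmf (\<lambda>y. (x, y)) (Q x)))"

definition count_N :: "(nat \<times> 'b) set \<Rightarrow> nat \<Rightarrow> nat \<Rightarrow> (nat \<Rightarrow> nat \<times> 'b) \<Rightarrow> nat" where
  "count_N I n x w = card {i \<in> {..<n}. (x, snd (w i)) \<in> I}"

definition bd_est ::
  "nat \<Rightarrow> nat \<Rightarrow> nat \<Rightarrow> (nat \<times> 'b) set \<Rightarrow> real \<Rightarrow> nat \<Rightarrow> nat \<Rightarrow> (nat \<Rightarrow> nat \<times> 'b) \<Rightarrow> real" where
  "bd_est b r lam I \<epsilon> n x w =
     1 / ((real r - real lam) * (exp \<epsilon> - 1)) *
     (real (count_N I n x w) / (real n * bd_alpha b r \<epsilon>)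
        - (real lam * exp \<epsilon> + (real r - real lam)))"

definition bd_risk ::
  "nat \<Rightarrow> nat \<Rightarrow> nat \<Rightarrow> nat \<Rightarrow> 'b set \<Rightarrow> (nat \<times> 'b) set \<Rightarrow> real \<Rightarrow> nat \<Rightarrow> nat pmf \<Rightarrow> real" where
  "bd_risk v b r lam Y I \<epsilon> n P =
     measure_pmf.expectation (sample P (bd_mech b r Y I \<epsilon>) n)
       (\<lambda>w. \<Sum>x\<in>{1..v}. (pmf P x - bd_est b r lam I \<epsilon> n x w)\<^sup>2)"

end

theory Submission
  imports Defs
begin

text \<open>
  A report \<open>Y\<close> falls into a block through \<open>x\<close> with probability
  \<open>p\<^sub>x = \<alpha> (c + D P\<^sub>x)\<close>, where \<open>c = \<lambda> e\<^sup>\<epsilon> + r - \<lambda>\<close> and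
  \<open>D = (r - \<lambda>) (e\<^sup>\<epsilon> - 1)\<close> (called \<open>offset\<close> and \<open>gain\<close> below): the \<open>r\<close> blocks
  through \<open>x\<close> have weight \<open>\<alpha> e\<^sup>\<epsilon>\<close> when they contain \<open>X\<close> as well, and a point
  \<open>X \<noteq> x\<close> lies in exactly \<open>\<lambda>\<close> of them. So \<open>N\<^sub>x\<close> is a sum of \<open>n\<close> i.i.d.
  Bernoulli(\<open>p\<^sub>x\<close>) variables, the estimator \<open>(N\<^sub>x / (n \<alpha>) - c) / D\<close> is
  unbiased, and its mean squared error is \<open>p\<^sub>x (1 - p\<^sub>x) / (n \<alpha>\<^sup>2 D\<^sup>2)\<close>.
  Summing over \<open>x\<close> and eliminating \<open>b\<close> and \<open>\<lambda>\<close> with the design identities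
  \<open>b k = v r\<close> and \<open>\<lambda> (v - 1) = r (k - 1)\<close> gives the risk formula; since
  \<open>\<Sum>\<^sub>x P\<^sub>x\<^sup>2 \<ge> 1 / v\<close> with equality for the uniform distribution, the
  uniform distribution attains the supremum.
\<close>

section \<open>Finite distributions and i.i.d. samples\<close>

lemma finite_set_Pi_pmf:
  assumes "finite A" "\<And>i. i \<in> A \<Longrightarrow> finite (set_pmf (p i))"
  shows "finite (set_pmf (Pi_pmf A d p))"
  using assms by (simp add: set_Pi_pmf finite_PiE_dflt)

lemma expectation_Pi_pmf_component:
  fixes f :: "'b \<Rightarrow> real"
  assumes "finite A" "i \<in> A"
  shows "measure_pmf.expectation (Pi_pmf A d p) (\<lambda>w. f (w i)) = measure_pmf.expectation (p i) f"
proof -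
  have "measure_pmf.expectation (Pi_pmf A d p) (\<lambda>w. f (w i))
      = measure_pmf.expectation (map_pmf (\<lambda>w. w i) (Pi_pmf A d p)) f"
    by simp
  also have "map_pmf (\<lambda>w. w i) (Pi_pmf A d p) = p i"
    using assms by (simp add: Pi_pmf_component)
  finally show ?thesis .
qed

lemma expectation_Pi_pmf_pair:
  fixes f g :: "'b \<Rightarrow> real"
  assumes "finite A" "i \<in> A" "j \<in> A" "i \<noteq> j"
    and "integrable (measure_pmf (p i)) f" "integrable (measure_pmf (p j)) g"
    and "\<And>z. f z \<ge> 0" "\<And>z. g z \<ge> 0"
  shows "measure_pmf.expectation (Pi_pmf A d p) (\<lambda>w. f (w i) * g (w j))
       = measure_pmf.expectation (p i) f * measure_pmf.expectation (p j) g"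
proof -
  define F where "F l = (if l = i then f else if l = j then g else (\<lambda>_. 1))" for l
  have "(\<Prod>l\<in>A. F l (w l)) = f (w i) * g (w j)" for w
  proof -
    have "(\<Prod>l\<in>A. F l (w l)) = F i (w i) * (F j (w j) * (\<Prod>l\<in>A - {i} - {j}. F l (w l)))"
      using assms(1-4) by (simp add: prod.remove[of A i] prod.remove[of "A - {i}" j])
    also have "(\<Prod>l\<in>A - {i} - {j}. F l (w l)) = 1"
      by (intro prod.neutral) (simp add: F_def)
    finally show ?thesis
      using assms(4) by (simp add: F_def)
  qed
  then have "measure_pmf.expectation (Pi_pmf A d p) (\<lambda>w. f (w i) * g (w j))
      = measure_pmf.expectation (Pi_pmf A d p) (\<lambda>w. \<Prod>l\<in>A. F l (w l))"
    by simp
  also have "\<dots> = (\<Prod>l\<in>A. measure_pmf.expectation (p l) (F l))"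
    using assms by (intro expectation_prod_Pi_pmf) (auto simp: F_def)
  also have "\<dots> = measure_pmf.expectation (p i) f * measure_pmf.expectation (p j) g"
    using assms(1-4) by (simp add: F_def prod.remove[of A i] prod.remove[of "A - {i}" j])
  finally show ?thesis .
qed

lemma expectation_iid_sum:
  fixes h :: "'b \<Rightarrow> real"
  assumes "finite A" "finite (set_pmf \<mu>)"
  shows "measure_pmf.expectation (Pi_pmf A d (\<lambda>_. \<mu>)) (\<lambda>w. \<Sum>i\<in>A. h (w i))
       = card A * measure_pmf.expectation \<mu> h"
proof -
  have "measure_pmf.expectation (Pi_pmf A d (\<lambda>_. \<mu>)) (\<lambda>w. \<Sum>i\<in>A. h (w i))
      = (\<Sum>i\<in>A. measure_pmf.expectation (Pi_pmf A d (\<lambda>_. \<mu>)) (\<lambda>w. h (w i)))"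
    using assms by (intro Bochner_Integration.integral_sum integrable_measure_pmf_finite finite_set_Pi_pmf)
  also have "\<dots> = (\<Sum>i\<in>A. measure_pmf.expectation \<mu> h)"
    using assms(1) by (intro sum.cong refl expectation_Pi_pmf_component)
  finally show ?thesis
    by simp
qed

lemma expectation_iid_sum_squared:
  fixes h :: "'b \<Rightarrow> real"
  assumes "finite A" "finite (set_pmf \<mu>)" "\<And>z. h z \<ge> 0"
  shows "measure_pmf.expectation (Pi_pmf A d (\<lambda>_. \<mu>)) (\<lambda>w. (\<Sum>i\<in>A. h (w i))\<^sup>2)
       = card A * measure_pmf.expectation \<mu> (\<lambda>z. (h z)\<^sup>2)
         + card A * (real (card A) - 1) * (measure_pmf.expectation \<mu> h)\<^sup>2"
proof -
  let ?M = "Pi_pmf A d (\<lambda>_. \<mu>)"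
  let ?m = "measure_pmf.expectation \<mu> h" and ?m2 = "measure_pmf.expectation \<mu> (\<lambda>z. (h z)\<^sup>2)"
  have int_M: "integrable ?M f" for f :: "_ \<Rightarrow> real"
    using assms(1,2) by (intro integrable_measure_pmf_finite finite_set_Pi_pmf)
  have int_\<mu>: "integrable \<mu> f" for f :: "_ \<Rightarrow> real"
    using assms(2) by (rule integrable_measure_pmf_finite)
  have "measure_pmf.expectation ?M (\<lambda>w. (\<Sum>i\<in>A. h (w i))\<^sup>2)
      = measure_pmf.expectation ?M (\<lambda>w. \<Sum>i\<in>A. \<Sum>j\<in>A. h (w i) * h (w j))"
    by (simp add: power2_eq_square sum_product)
  also have "\<dots> = (\<Sum>i\<in>A. \<Sum>j\<in>A. measure_pmf.expectation ?M (\<lambda>w. h (w i) * h (w j)))"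
    by (simp add: int_M)
  also have "\<dots> = (\<Sum>i\<in>A. \<Sum>j\<in>A. ?m\<^sup>2 + (if j = i then ?m2 - ?m\<^sup>2 else 0))"
  proof (intro sum.cong refl)
    fix i j assume ij: "i \<in> A" "j \<in> A"
    show "measure_pmf.expectation ?M (\<lambda>w. h (w i) * h (w j))
        = ?m\<^sup>2 + (if j = i then ?m2 - ?m\<^sup>2 else 0)"
    proof (cases "j = i")
      case True
      have "measure_pmf.expectation ?M (\<lambda>w. (\<lambda>z. (h z)\<^sup>2) (w i)) = ?m2"
        using assms(1) ij(1) by (rule expectation_Pi_pmf_component)
      then show ?thesis
        using True by (simp add: power2_eq_square)
    next
      case False
      then show ?thesis
        using expectation_Pi_pmf_pair[OF assms(1) ij False[symmetric] int_\<mu> int_\<mu> assms(3) assms(3)]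
        by (simp add: power2_eq_square)
    qed
  qed
  also have "\<dots> = card A * ?m2 + card A * (real (card A) - 1) * ?m\<^sup>2"
    using assms(1) by (simp add: sum.distrib algebra_simps)
  finally show ?thesis .
qed

lemma expectation_iid_sum_centered_squared:
  fixes h :: "'b \<Rightarrow> real"
  assumes "finite A" "finite (set_pmf \<mu>)" "\<And>z. h z \<ge> 0"
  shows "measure_pmf.expectation (Pi_pmf A d (\<lambda>_. \<mu>))
           (\<lambda>w. ((\<Sum>i\<in>A. h (w i)) - card A * measure_pmf.expectation \<mu> h)\<^sup>2)
       = card A * (measure_pmf.expectation \<mu> (\<lambda>z. (h z)\<^sup>2) - (measure_pmf.expectation \<mu> h)\<^sup>2)"
proof -
  let ?M = "Pi_pmf A d (\<lambda>_. \<mu>)" and ?S = "\<lambda>w. \<Sum>i\<in>A. h (w i)"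
  let ?m = "measure_pmf.expectation \<mu> h" and ?n = "real (card A)"
  have int_M: "integrable ?M f" for f :: "_ \<Rightarrow> real"
    using assms(1,2) by (intro integrable_measure_pmf_finite finite_set_Pi_pmf)
  have sum: "measure_pmf.expectation ?M ?S = ?n * ?m"
    using assms(1,2) by (rule expectation_iid_sum)
  have "measure_pmf.expectation ?M (\<lambda>w. (?S w - ?n * ?m)\<^sup>2)
      = measure_pmf.expectation ?M (\<lambda>w. (?S w)\<^sup>2) - 2 * ?n * ?m * measure_pmf.expectation ?M ?S
        + (?n * ?m)\<^sup>2"
    by (simp add: power2_diff int_M)
  also have "\<dots> = ?n * measure_pmf.expectation \<mu> (\<lambda>z. (h z)\<^sup>2) + ?n * (?n - 1) * ?m\<^sup>2
                    - 2 * ?n * ?m * (?n * ?m) + (?n * ?m)\<^sup>2"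
    using expectation_iid_sum_squared[where h = h and d = d, OF assms] sum by simp
  finally show ?thesis
    by (simp add: power2_eq_square algebra_simps)
qed

lemma measure_bind_pmf_finite:
  assumes "finite S" "finite A" "set_pmf P \<subseteq> A"
  shows "measure_pmf.prob (bind_pmf P Q) S = (\<Sum>x\<in>A. pmf P x * measure_pmf.prob (Q x) S)"
proof -
  have "measure_pmf.prob (bind_pmf P Q) S = (\<Sum>y\<in>S. pmf (bind_pmf P Q) y)"
    using assms(1) by (rule measure_measure_pmf_finite)
  also have "\<dots> = (\<Sum>y\<in>S. \<Sum>x\<in>A. pmf (Q x) y * pmf P x)"
    unfolding pmf_bind using assms(2,3) by (intro sum.cong refl integral_measure_pmf_real) auto
  also have "\<dots> = (\<Sum>x\<in>A. pmf P x * measure_pmf.prob (Q x) S)"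
    using assms(1) by (simp add: sum.swap[of _ S] measure_measure_pmf_finite sum_distrib_left mult.commute)
  finally show ?thesis .
qed

lemma map_snd_bind_Pair:
  "map_pmf snd (bind_pmf P (\<lambda>x. map_pmf (\<lambda>y. (x, y)) (Q x))) = bind_pmf P Q"
  by (simp add: map_bind_pmf map_pmf_comp)

lemma sum_pmf_squares_ge:
  assumes "finite A" "set_pmf P \<subseteq> A"
  shows "1 / card A \<le> (\<Sum>x\<in>A. (pmf P x)\<^sup>2)"
proof -
  have "card A > 0"
    using assms set_pmf_not_empty[of P] by (auto simp: card_gt_0_iff)
  moreover have "1 \<le> (\<Sum>x\<in>A. (pmf P x)\<^sup>2) * card A"
    using sum_squared_le_sum_of_squares[of "pmf P" A] sum_pmf_eq_1[OF assms] by simp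
  ultimately show ?thesis
    by (simp add: field_simps)
qed

lemma sum_pmf_of_set_squares:
  assumes "finite A" "A \<noteq> {}"
  shows "(\<Sum>x\<in>A. (pmf (pmf_of_set A) x)\<^sup>2) = 1 / card A"
  using assms by (simp add: power2_eq_square)

section \<open>Block designs\<close>

lemma card_relation_double_count:
  assumes "finite A" "finite B" "R \<subseteq> A \<times> B"
  shows "(\<Sum>a\<in>A. card {b. (a, b) \<in> R}) = (\<Sum>b\<in>B. card {a. (a, b) \<in> R})"
proof -
  have rows: "card {b. (a, b) \<in> R} = (\<Sum>b\<in>B. of_bool ((a, b) \<in> R))" for a
    using assms(2,3) by (subst sum_of_bool_eq) (auto intro: arg_cong[where f = card])
  have cols: "card {a. (a, b) \<in> R} = (\<Sum>a\<in>A. of_bool ((a, b) \<in> R))" for b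
    using assms(1,3) by (subst sum_of_bool_eq) (auto intro: arg_cong[where f = card])
  show ?thesis
    unfolding rows cols by (rule sum.swap)
qed

locale bibd =
  fixes v b r k lam :: nat and Y :: "'b set" and I :: "(nat \<times> 'b) set"
  assumes design: "block_design v b r k lam Y I"
begin

lemma params: "k < v" "0 < k" "r < b" "lam < r"
  using design unfolding block_design_def by auto

lemma incidence_subset: "I \<subseteq> {1..v} \<times> Y"
  using design unfolding block_design_def by auto

lemma finite_blocks: "finite Y" and card_blocks: "card Y = b"
  using design unfolding block_design_def by auto

lemma card_incident: "x \<in> {1..v} \<Longrightarrow> card {y. (x, y) \<in> I} = r"
  using design unfolding block_design_def by auto

lemma card_block: "y \<in> Y \<Longrightarrow> card {x. (x, y) \<in> I} = k"
  using design unfolding block_design_def by auto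

lemma card_common_incident:
  "x \<in> {1..v} \<Longrightarrow> x' \<in> {1..v} \<Longrightarrow> x \<noteq> x' \<Longrightarrow>
     card ({y. (x, y) \<in> I} \<inter> {y. (x', y) \<in> I}) = lam"
  using design unfolding block_design_def by auto

lemma incident_subset: "{y. (x, y) \<in> I} \<subseteq> Y"
  using incidence_subset by auto

lemma finite_incident: "finite {y. (x, y) \<in> I}"
  using incident_subset finite_blocks by (rule finite_subset)

lemma finite_block: "finite {x. (x, y) \<in> I}"
proof (rule finite_subset)
  show "{x. (x, y) \<in> I} \<subseteq> {1..v}"
    using incidence_subset by auto
qed simp

lemma replication: "b * k = v * r"
proof -
  have "(\<Sum>x\<in>{1..v}. card {y. (x, y) \<in> I}) = (\<Sum>y\<in>Y. card {x. (x, y) \<in> I})"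
    using finite_blocks incidence_subset by (intro card_relation_double_count) auto
  then show ?thesis
    by (simp add: card_incident card_block card_blocks)
qed

lemma pair_balance: "lam * (v - 1) = r * (k - 1)"
proof -
  define R where "R = {(x, y). x \<noteq> 1 \<and> (1, y) \<in> I \<and> (x, y) \<in> I}"
  have one: "(1::nat) \<in> {1..v}"
    using params by auto
  have "(\<Sum>x\<in>{1..v} - {1}. card {y. (x, y) \<in> R}) = (\<Sum>y\<in>{y. (1, y) \<in> I}. card {x. (x, y) \<in> R})"
    using incidence_subset finite_incident unfolding R_def
    by (intro card_relation_double_count) auto
  also have "(\<Sum>x\<in>{1..v} - {1}. card {y. (x, y) \<in> R}) = (\<Sum>x\<in>{1..v} - {1}. lam)"
    using card_common_incident[OF one] unfolding R_def by (intro sum.cong refl) (auto simp: Int_def)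
  also have "(\<Sum>y\<in>{y. (1, y) \<in> I}. card {x. (x, y) \<in> R}) = (\<Sum>y\<in>{y. (1, y) \<in> I}. k - 1)"
  proof (intro sum.cong refl)
    fix y assume y: "y \<in> {y. (1, y) \<in> I}"
    then have "{x. (x, y) \<in> R} = {x. (x, y) \<in> I} - {1}" "y \<in> Y"
      unfolding R_def using incident_subset by auto
    then show "card {x. (x, y) \<in> R} = k - 1"
      using y finite_block card_block by simp
  qed
  finally show ?thesis
    using one card_incident by (simp add: mult.commute)
qed

end

lemma bibd_risk_numerator:
  fixes v k r lam b e :: real
  assumes "k \<noteq> 0" "v \<noteq> 0" "b * k = v * r" "lam * (v - 1) = r * (k - 1)"
  defines "c \<equiv> lam * e + (r - lam)" and "D \<equiv> (r - lam) * (e - 1)" and "u \<equiv> k * e + v - k"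
  shows "(v * c + D) * (r * e + b - r) - (v * c\<^sup>2 + 2 * c * D) = (r * u)\<^sup>2 * (v - k) / (k * v) + D\<^sup>2 / v"
proof -
  have "v * c + D = (e - 1) * (lam * (v - 1) + r) + r * v"
    unfolding c_def D_def by (simp add: algebra_simps)
  also have "\<dots> = r * u"
    unfolding assms(4) u_def by (simp add: algebra_simps)
  finally have sum_c: "v * c + D = r * u" .
  have inv_alpha: "r * e + b - r = r * u / k"
    using assms(1,3) unfolding u_def by (simp add: field_simps)
  have c_eq: "c = (r * u - D) / v"
    using sum_c assms(2) by (simp add: field_simps)
  have "(v * c + D) * (r * e + b - r) - (v * c\<^sup>2 + 2 * c * D)
      = (v * c + D) * (r * e + b - r) - (c * (v * c + D) + c * D)"
    by (simp add: algebra_simps power2_eq_square)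
  also have "\<dots> = (r * u)\<^sup>2 / k - c * (r * u + D)"
    unfolding sum_c inv_alpha by (simp add: algebra_simps power2_eq_square)
  also have "\<dots> = (r * u)\<^sup>2 / k - ((r * u)\<^sup>2 - D\<^sup>2) / v"
    unfolding c_eq by (simp add: power2_eq_square algebra_simps)
  also have "\<dots> = (r * u)\<^sup>2 * (v - k) / (k * v) + D\<^sup>2 / v"
    using assms(1,2) by (simp add: field_simps)
  finally show ?thesis .
qed

lemma bibd_risk_constant:
  fixes v k r lam b e :: real
  assumes "1 \<le> k" "k < v" "lam < r" "1 < e" "b * k = v * r" "lam * (v - 1) = r * (k - 1)"
  defines "c \<equiv> lam * e + (r - lam)" and "D \<equiv> (r - lam) * (e - 1)"
  shows "((v * c + D) * (r * e + b - r) - (v * c\<^sup>2 + 2 * c * D)) / D\<^sup>2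
       = (v - 1)\<^sup>2 * (k * e + v - k)\<^sup>2 / (k * (v - k) * (e - 1)\<^sup>2 * v) + 1 / v"
proof -
  define u where "u = k * e + v - k"
  have v1: "v - 1 > 0"
    using assms(1,2) by linarith
  have r_lam: "(r - lam) * (v - 1) = r * (v - k)"
    using assms(6) by (simp add: algebra_simps)
  have "r > 0"
    using r_lam assms(2,3) v1 by (smt (verit) mult_pos_pos mult_le_0_iff)
  have D_pos: "D > 0"
    using assms(3,4) unfolding D_def by simp
  have "r - lam = r * (v - k) / (v - 1)"
    using r_lam v1 by (simp add: field_simps)
  then have D_eq: "D = r * (v - k) * (e - 1) / (v - 1)"
    unfolding D_def by simp
  have "(v * c + D) * (r * e + b - r) - (v * c\<^sup>2 + 2 * c * D) = (r * u)\<^sup>2 * (v - k) / (k * v) + D\<^sup>2 / v"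
    unfolding c_def D_def u_def using assms(1,2,5,6) by (intro bibd_risk_numerator) auto
  then have "((v * c + D) * (r * e + b - r) - (v * c\<^sup>2 + 2 * c * D)) / D\<^sup>2
      = ((r * u)\<^sup>2 * (v - k) / (k * v) + D\<^sup>2 / v) / D\<^sup>2"
    by (simp only:)
  also have "\<dots> = (r * u)\<^sup>2 * (v - k) / (k * v * D\<^sup>2) + 1 / v"
    using D_pos assms(1,2) by (simp add: field_simps)
  also have "(r * u)\<^sup>2 * (v - k) / (k * v * D\<^sup>2) = (v - 1)\<^sup>2 * u\<^sup>2 / (k * (v - k) * (e - 1)\<^sup>2 * v)"
  proof -
    \<comment> \<open>abstracting \<open>v - k\<close>, \<open>e - 1\<close> and \<open>v - 1\<close> keeps \<open>field_simps\<close> from multiplying them out\<close>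
    have "(r * u)\<^sup>2 * w / (k * v * (r * w * s / m)\<^sup>2) = m\<^sup>2 * u\<^sup>2 / (k * w * s\<^sup>2 * v)"
      if "w > 0" "s > 0" "m > 0" for w s m
      using that \<open>r > 0\<close> assms(1,2) by (simp add: field_simps power2_eq_square)
    then show ?thesis
      unfolding D_eq using v1 assms(2,4) by simp
  qed
  finally show ?thesis
    unfolding u_def by (simp add: mult.commute)
qed

section \<open>The block design mechanism\<close>

locale bibd_mechanism = bibd v b r k lam Y I
  for v b r k lam :: nat and Y :: "'b set" and I :: "(nat \<times> 'b) set" +
  fixes \<epsilon> :: real
  assumes eps_pos: "\<epsilon> > 0"
begin

abbreviation "\<alpha> \<equiv> bd_alpha b r \<epsilon>"
abbreviation "Q \<equiv> bd_mech b r Y I \<epsilon>"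

definition offset :: real where "offset = real lam * exp \<epsilon> + (real r - real lam)"
definition gain :: real where "gain = (real r - real lam) * (exp \<epsilon> - 1)"

lemma inverse_alpha: "1 / \<alpha> = real r * exp \<epsilon> + real b - real r"
  unfolding bd_alpha_def by simp

lemma alpha_pos: "\<alpha> > 0"
proof -
  have "0 \<le> real r * exp \<epsilon>" "real r < real b"
    using params by auto
  then have "real r * exp \<epsilon> + real b - real r > 0"
    by linarith
  then show ?thesis
    unfolding bd_alpha_def by simp
qed

lemma gain_pos: "gain > 0"
  using params eps_pos unfolding gain_def by simp

lemma pmf_mech:
  assumes "x \<in> {1..v}"
  shows "pmf (Q x) y = (if y \<in> Y then if (x, y) \<in> I then \<alpha> * exp \<epsilon> else \<alpha> else 0)"
  unfolding bd_mech_def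
proof (rule pmf_embed_pmf)
  let ?q = "\<lambda>y. if y \<in> Y then if (x, y) \<in> I then \<alpha> * exp \<epsilon> else \<alpha> else 0"
  show "0 \<le> ?q y" for y
    using alpha_pos by simp
  have "(\<Sum>y\<in>Y. ?q y) = \<alpha> * exp \<epsilon> * card {y. (x, y) \<in> I} + \<alpha> * card (Y - {y. (x, y) \<in> I})"
    using finite_blocks incident_subset by (simp add: sum.If_cases Int_absorb1 Diff_eq)
  also have "\<dots> = \<alpha> * (real r * exp \<epsilon> + real b - real r)"
    using card_incident[OF assms] card_Diff_subset[OF finite_incident incident_subset] params
    by (simp add: card_blocks algebra_simps)
  also have "\<dots> = 1"
    using alpha_pos inverse_alpha by (simp add: field_simps)
  finally have "(\<Sum>y\<in>Y. ?q y) = 1" .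
  moreover have "(\<integral>\<^sup>+ y. ennreal (?q y) \<partial>count_space UNIV) = ennreal (\<Sum>y\<in>Y. ?q y)"
    using finite_blocks alpha_pos
    by (subst nn_integral_count_space'[of Y]) (auto intro: sum_ennreal)
  ultimately show "(\<integral>\<^sup>+ y. ennreal (?q y) \<partial>count_space UNIV) = 1"
    by simp
qed

lemma set_pmf_mech: "x \<in> {1..v} \<Longrightarrow> set_pmf (Q x) \<subseteq> Y"
  by (auto simp: set_pmf_eq pmf_mech)

lemma measure_mech_incident:
  assumes "x \<in> {1..v}" "x' \<in> {1..v}"
  shows "measure_pmf.prob (Q x') {y. (x, y) \<in> I} = \<alpha> * (offset + (if x' = x then gain else 0))"
proof -
  let ?Ix = "{y. (x, y) \<in> I}" and ?Ix' = "{y. (x', y) \<in> I}"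
  have "measure_pmf.prob (Q x') ?Ix = (\<Sum>y\<in>?Ix. pmf (Q x') y)"
    using finite_incident by (rule measure_measure_pmf_finite)
  also have "\<dots> = (\<Sum>y\<in>?Ix. if y \<in> ?Ix' then \<alpha> * exp \<epsilon> else \<alpha>)"
  proof (intro sum.cong refl)
    fix y assume "y \<in> ?Ix"
    then have "y \<in> Y"
      using incident_subset by blast
    then show "pmf (Q x') y = (if y \<in> ?Ix' then \<alpha> * exp \<epsilon> else \<alpha>)"
      using assms(2) by (simp add: pmf_mech)
  qed
  also have "\<dots> = \<alpha> * exp \<epsilon> * card (?Ix \<inter> ?Ix') + \<alpha> * card (?Ix - ?Ix')"
    using finite_incident by (simp add: sum.If_cases Diff_eq)
  also have "\<dots> = \<alpha> * (offset + (if x' = x then gain else 0))"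
  proof (cases "x' = x")
    case True
    then show ?thesis
      using card_incident[OF assms(1)] unfolding offset_def gain_def by (simp add: algebra_simps)
  next
    case False
    then have "card (?Ix \<inter> ?Ix') = lam"
      using card_common_incident[OF assms] by simp
    moreover have "card (?Ix - ?Ix') = r - lam"
      using calculation card_incident[OF assms(1)] finite_incident
      by (simp add: card_Diff_subset_Int flip: Diff_Int2)
    ultimately show ?thesis
      using False params unfolding offset_def by (simp add: algebra_simps)
  qed
  finally show ?thesis .
qed

definition hit_prob :: "nat pmf \<Rightarrow> nat \<Rightarrow> real" where
  "hit_prob P x = measure_pmf.prob (bind_pmf P Q) {y. (x, y) \<in> I}"

lemma hit_prob_eq:
  assumes P: "P \<in> prob_simplex v" and x: "x \<in> {1..v}"
  shows "hit_prob P x = \<alpha> * (offset + gain * pmf P x)"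
proof -
  have P_sub: "set_pmf P \<subseteq> {1..v}"
    using P unfolding prob_simplex_def by simp
  have "hit_prob P x = (\<Sum>x'\<in>{1..v}. pmf P x' * measure_pmf.prob (Q x') {y. (x, y) \<in> I})"
    unfolding hit_prob_def using P_sub by (intro measure_bind_pmf_finite finite_incident) auto
  also have "\<dots> = (\<Sum>x'\<in>{1..v}. \<alpha> * offset * pmf P x' + (if x' = x then \<alpha> * gain * pmf P x else 0))"
    by (intro sum.cong refl) (simp add: measure_mech_incident[OF x] algebra_simps)
  also have "\<dots> = \<alpha> * (offset + gain * pmf P x)"
    using x sum_pmf_eq_1[OF _ P_sub] by (simp add: sum.distrib algebra_simps flip: sum_distrib_right)
  finally show ?thesis .
qed

lemma count_N_eq_sum: "real (count_N I n x w) = (\<Sum>i<n. of_bool ((x, snd (w i)) \<in> I))"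
  unfolding count_N_def by (simp add: Int_def)

lemma finite_set_pair_law:
  assumes "P \<in> prob_simplex v"
  shows "finite (set_pmf (bind_pmf P (\<lambda>x. map_pmf (\<lambda>y. (x, y)) (Q x))))"
proof (rule finite_subset)
  show "set_pmf (bind_pmf P (\<lambda>x. map_pmf (\<lambda>y. (x, y)) (Q x))) \<subseteq> {1..v} \<times> Y"
    using assms set_pmf_mech unfolding prob_simplex_def by fastforce
qed (simp add: finite_blocks)

lemma finite_set_sample:
  "P \<in> prob_simplex v \<Longrightarrow> finite (set_pmf (sample P Q n))"
  unfolding sample_def by (intro finite_set_Pi_pmf finite_set_pair_law finite_lessThan)

lemma
  assumes P: "P \<in> prob_simplex v" and x: "x \<in> {1..v}"
  shows expectation_count:
      "measure_pmf.expectation (sample P Q n) (\<lambda>w. real (count_N I n x w)) = n * hit_prob P x"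
    and expectation_count_centered_squared:
      "measure_pmf.expectation (sample P Q n) (\<lambda>w. (real (count_N I n x w) - n * hit_prob P x)\<^sup>2)
       = n * (hit_prob P x * (1 - hit_prob P x))"
proof -
  define \<mu> where "\<mu> = bind_pmf P (\<lambda>x. map_pmf (\<lambda>y. (x, y)) (Q x))"
  define h where "h = (indicator {z. (x, snd z) \<in> I} :: nat \<times> 'b \<Rightarrow> real)"
  have sample: "sample P Q n = Pi_pmf {..<n} undefined (\<lambda>_. \<mu>)"
    unfolding sample_def \<mu>_def ..
  have count: "(\<lambda>w. real (count_N I n x w)) = (\<lambda>w. \<Sum>i<n. h (w i))"
    by (simp add: count_N_eq_sum h_def indicator_def)
  have fin: "finite (set_pmf \<mu>)"
    unfolding \<mu>_def using P by (rule finite_set_pair_law)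
  have "measure_pmf.expectation \<mu> h = measure_pmf.prob \<mu> {z. (x, snd z) \<in> I}"
    unfolding h_def by simp
  also have "\<dots> = measure_pmf.prob (map_pmf snd \<mu>) {y. (x, y) \<in> I}"
    by (simp add: vimage_def)
  also have "map_pmf snd \<mu> = bind_pmf P Q"
    unfolding \<mu>_def by (rule map_snd_bind_Pair)
  finally have Eh: "measure_pmf.expectation \<mu> h = hit_prob P x"
    by (simp add: hit_prob_def)
  have "(\<lambda>z. (h z)\<^sup>2) = h"
    by (simp add: h_def fun_eq_iff indicator_def)
  then have Eh2: "measure_pmf.expectation \<mu> (\<lambda>z. (h z)\<^sup>2) = hit_prob P x"
    using Eh by simp
  have h_nonneg: "h z \<ge> 0" for z
    by (simp add: h_def)
  show "measure_pmf.expectation (sample P Q n) (\<lambda>w. real (count_N I n x w)) = n * hit_prob P x"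
    unfolding count sample expectation_iid_sum[OF finite_lessThan fin] Eh by simp
  have "measure_pmf.expectation (sample P Q n) (\<lambda>w. (real (count_N I n x w) - n * hit_prob P x)\<^sup>2)
      = measure_pmf.expectation (Pi_pmf {..<n} undefined (\<lambda>_. \<mu>))
          (\<lambda>w. ((\<Sum>i<n. h (w i)) - card {..<n} * measure_pmf.expectation \<mu> h)\<^sup>2)"
    unfolding sample Eh using count by (simp add: fun_eq_iff)
  also have "\<dots> = card {..<n} * (measure_pmf.expectation \<mu> (\<lambda>z. (h z)\<^sup>2) - (measure_pmf.expectation \<mu> h)\<^sup>2)"
    using fin h_nonneg by (intro expectation_iid_sum_centered_squared) auto
  also have "\<dots> = n * (hit_prob P x * (1 - hit_prob P x))"
    unfolding Eh Eh2 by (simp add: power2_eq_square algebra_simps)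
  finally show "measure_pmf.expectation (sample P Q n) (\<lambda>w. (real (count_N I n x w) - n * hit_prob P x)\<^sup>2)
       = n * (hit_prob P x * (1 - hit_prob P x))" .
qed

lemma estimator_error:
  assumes P: "P \<in> prob_simplex v" and x: "x \<in> {1..v}" and n: "n \<ge> 1"
  shows "pmf P x - bd_est b r lam I \<epsilon> n x w
       = (n * hit_prob P x - real (count_N I n x w)) / (n * \<alpha> * gain)"
proof -
  have "bd_est b r lam I \<epsilon> n x w = (real (count_N I n x w) / (n * \<alpha>) - offset) / gain"
    unfolding bd_est_def offset_def gain_def by simp
  then show ?thesis
    using n alpha_pos gain_pos unfolding hit_prob_eq[OF P x]
    by (simp add: field_simps)
qed

lemma estimator_unbiased:
  assumes P: "P \<in> prob_simplex v" and x: "x \<in> {1..v}" and n: "n \<ge> 1"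
  shows "measure_pmf.expectation (sample P Q n) (bd_est b r lam I \<epsilon> n x) = pmf P x"
proof -
  have int: "integrable (measure_pmf (sample P Q n)) f" for f :: "_ \<Rightarrow> real"
    using finite_set_sample[OF P] by (rule integrable_measure_pmf_finite)
  have "measure_pmf.expectation (sample P Q n) (\<lambda>w. pmf P x - bd_est b r lam I \<epsilon> n x w)
      = (n * hit_prob P x - measure_pmf.expectation (sample P Q n) (\<lambda>w. real (count_N I n x w)))
        / (n * \<alpha> * gain)"
    unfolding estimator_error[OF assms] using int by simp
  also have "\<dots> = 0"
    by (simp add: expectation_count[OF P x])
  finally show ?thesis
    using int by simp
qed

lemma estimator_squared_error:
  assumes P: "P \<in> prob_simplex v" and x: "x \<in> {1..v}" and n: "n \<ge> 1"
  shows "measure_pmf.expectation (sample P Q n) (\<lambda>w. (pmf P x - bd_est b r lam I \<epsilon> n x w)\<^sup>2)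
       = hit_prob P x * (1 - hit_prob P x) / (n * \<alpha>\<^sup>2 * gain\<^sup>2)"
proof -
  have "measure_pmf.expectation (sample P Q n) (\<lambda>w. (pmf P x - bd_est b r lam I \<epsilon> n x w)\<^sup>2)
      = measure_pmf.expectation (sample P Q n) (\<lambda>w. (real (count_N I n x w) - n * hit_prob P x)\<^sup>2)
        / (n * \<alpha> * gain)\<^sup>2"
    unfolding estimator_error[OF assms] by (simp add: power_divide power2_commute)
  also have "\<dots> = hit_prob P x * (1 - hit_prob P x) / (n * \<alpha>\<^sup>2 * gain\<^sup>2)"
    unfolding expectation_count_centered_squared[OF P x] using n
    by (simp add: power2_eq_square)
  finally show ?thesis .
qed

lemma bd_risk_eq:
  assumes P: "P \<in> prob_simplex v" and n: "n \<ge> 1"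
  shows "bd_risk v b r lam Y I \<epsilon> n P =
          1 / real n * ((real v - 1)\<^sup>2 * (real k * exp \<epsilon> + real v - real k)\<^sup>2
             / (real k * (real v - real k) * (exp \<epsilon> - 1)\<^sup>2 * real v)
           + 1 / real v - (\<Sum>x\<in>{1..v}. (pmf P x)\<^sup>2))"
proof -
  let ?p = "hit_prob P" and ?S2 = "\<Sum>x\<in>{1..v}. (pmf P x)\<^sup>2"
  have sum1: "(\<Sum>x\<in>{1..v}. pmf P x) = 1"
    using P unfolding prob_simplex_def by (intro sum_pmf_eq_1) auto
  have int: "integrable (measure_pmf (sample P Q n)) f" for f :: "_ \<Rightarrow> real"
    using finite_set_sample[OF P] by (rule integrable_measure_pmf_finite)
  have "bd_risk v b r lam Y I \<epsilon> n P = (\<Sum>x\<in>{1..v}. ?p x * (1 - ?p x) / (n * \<alpha>\<^sup>2 * gain\<^sup>2))"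
    unfolding bd_risk_def using int by (simp add: estimator_squared_error[OF P _ n])
  also have "\<dots> = ((\<Sum>x\<in>{1..v}. ?p x) - (\<Sum>x\<in>{1..v}. (?p x)\<^sup>2)) / (n * \<alpha>\<^sup>2 * gain\<^sup>2)"
    by (simp add: sum_divide_distrib[symmetric] sum_subtractf algebra_simps power2_eq_square)
  also have "(\<Sum>x\<in>{1..v}. ?p x) = (\<Sum>x\<in>{1..v}. \<alpha> * offset + \<alpha> * gain * pmf P x)"
    by (intro sum.cong refl) (simp add: hit_prob_eq[OF P] algebra_simps)
  also have "\<dots> = \<alpha> * (v * offset + gain)"
    using sum1 by (simp add: sum.distrib algebra_simps flip: sum_distrib_left sum_distrib_right)
  also have "(\<Sum>x\<in>{1..v}. (?p x)\<^sup>2)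
      = (\<Sum>x\<in>{1..v}. \<alpha>\<^sup>2 * offset\<^sup>2 + 2 * \<alpha>\<^sup>2 * offset * gain * pmf P x + \<alpha>\<^sup>2 * gain\<^sup>2 * (pmf P x)\<^sup>2)"
    by (intro sum.cong refl) (simp add: hit_prob_eq[OF P] power2_eq_square algebra_simps)
  also have "\<dots> = \<alpha>\<^sup>2 * (v * offset\<^sup>2 + 2 * offset * gain + gain\<^sup>2 * ?S2)"
    using sum1 by (simp add: sum.distrib algebra_simps flip: sum_distrib_left sum_distrib_right)
  also have "(\<alpha> * (v * offset + gain) - \<alpha>\<^sup>2 * (v * offset\<^sup>2 + 2 * offset * gain + gain\<^sup>2 * ?S2))
             / (n * \<alpha>\<^sup>2 * gain\<^sup>2)
      = 1 / n * (((v * offset + gain) * (1 / \<alpha>) - (v * offset\<^sup>2 + 2 * offset * gain)) / gain\<^sup>2 - ?S2)"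
    using alpha_pos gain_pos n by (simp add: field_simps power2_eq_square)
  also have "((v * offset + gain) * (1 / \<alpha>) - (v * offset\<^sup>2 + 2 * offset * gain)) / gain\<^sup>2
      = (real v - 1)\<^sup>2 * (real k * exp \<epsilon> + real v - real k)\<^sup>2
             / (real k * (real v - real k) * (exp \<epsilon> - 1)\<^sup>2 * real v) + 1 / real v"
    unfolding inverse_alpha offset_def gain_def
  proof (rule bibd_risk_constant)
    show "real b * real k = real v * real r"
      using replication by (metis of_nat_mult)
    have "real (lam * (v - 1)) = real (r * (k - 1))"
      using pair_balance by (rule arg_cong)
    then show "real lam * (real v - 1) = real r * (real k - 1)"
      using params by simp
  qed (use params eps_pos in auto)
  finally show ?thesis
    by simp
qed

end

theorem theorem1:
  fixes v b r k lam n :: nat and Y :: "'b set" and I :: "(nat \<times> 'b) set" and \<epsilon> :: real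
  assumes "v \<ge> 2" and "n \<ge> 1" and "\<epsilon> > 0"
    and "block_design v b r k lam Y I"
  shows "(\<forall>P\<in>prob_simplex v. \<forall>x\<in>{1..v}.
            measure_pmf.expectation (sample P (bd_mech b r Y I \<epsilon>) n)
              (bd_est b r lam I \<epsilon> n x) = pmf P x)
    \<and> (\<forall>P\<in>prob_simplex v. bd_risk v b r lam Y I \<epsilon> n P =
          1 / real n * ((real v - 1)\<^sup>2 * (real k * exp \<epsilon> + real v - real k)\<^sup>2
             / (real k * (real v - real k) * (exp \<epsilon> - 1)\<^sup>2 * real v)
           + 1 / real v - (\<Sum>x\<in>{1..v}. (pmf P x)\<^sup>2)))
    \<and> (SUP P\<in>prob_simplex v. bd_risk v b r lam Y I \<epsilon> n P) =
          (real v - 1)\<^sup>2 * (real k * exp \<epsilon> + real v - real k)\<^sup>2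
             / (real k * (real v - real k) * (exp \<epsilon> - 1)\<^sup>2 * real n * real v)
    \<and> bd_risk v b r lam Y I \<epsilon> n (pmf_of_set {1..v}) =
          (real v - 1)\<^sup>2 * (real k * exp \<epsilon> + real v - real k)\<^sup>2
             / (real k * (real v - real k) * (exp \<epsilon> - 1)\<^sup>2 * real n * real v)"
proof -
  interpret bibd_mechanism v b r k lam Y I \<epsilon>
    using assms by unfold_locales
  define K where "K = (real v - 1)\<^sup>2 * (real k * exp \<epsilon> + real v - real k)\<^sup>2
             / (real k * (real v - real k) * (exp \<epsilon> - 1)\<^sup>2 * real v)"
  let ?U = "pmf_of_set {1..v}"
  have U: "?U \<in> prob_simplex v"
    using assms(1) unfolding prob_simplex_def by simp
  have risk_U: "bd_risk v b r lam Y I \<epsilon> n ?U = K / n"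
    using bd_risk_eq[OF U assms(2)] assms(1) sum_pmf_of_set_squares[of "{1..v}"]
    unfolding K_def by simp
  have "bd_risk v b r lam Y I \<epsilon> n P \<le> K / n" if "P \<in> prob_simplex v" for P
  proof -
    have "1 / card {1..v} \<le> (\<Sum>x\<in>{1..v}. (pmf P x)\<^sup>2)"
      using that unfolding prob_simplex_def by (intro sum_pmf_squares_ge) auto
    then show ?thesis
      using bd_risk_eq[OF that assms(2), folded K_def] by (simp add: divide_right_mono)
  qed
  then have "(SUP P\<in>prob_simplex v. bd_risk v b r lam Y I \<epsilon> n P) = K / n"
    using image_eqI[where f = "bd_risk v b r lam Y I \<epsilon> n", OF risk_U[symmetric] U]
    by (intro cSup_eq_maximum) auto
  moreover have "K / n = (real v - 1)\<^sup>2 * (real k * exp \<epsilon> + real v - real k)\<^sup>2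
             / (real k * (real v - real k) * (exp \<epsilon> - 1)\<^sup>2 * real n * real v)"
    unfolding K_def by (simp add: ac_simps)
  ultimately show ?thesis
    using estimator_unbiased bd_risk_eq risk_U assms(2) by auto
qed

end
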